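(* Let $\mathbb{K}=(G,M,I)$ be a finite formal context, and let $\cdot'$ denote derivation in $\mathbb{K}$ and $\cdot^{!}$ derivation in $BC(\mathbb{K})$. For every object $g\in G$, setting $\overline{A}:=\{\overline m\in\overline{\mathcal{M}(M)}\mid (g,m)\notin I\}$, we have $\overline{A}^{!}=g^{!}=g'$. In particular every intent of $\mathbb{K}$ is an intent of $BC(\mathbb{K})$, and the objects of $G$ are reducible in $BC(\mathbb{K})$ in the sense that the object intents of $G$ are intersections of object intents of new objects $\overline m$.
   Context: For a formal context $\mathbb{K}=(G,M,I)$, derivation operators: $A'=\{m\in M\mid\forall g\in A:(g,m)\in I\}$, $B'=\{g\in G\mid\forall m\in B:(g,m)\in I\}$; intents are sets $B\subseteq M$ with $B''=B$; $g'$ abbreviates $\{g\}'$. For $m,n\in M$ write $m\ge_{\mathbb{K}}n$ iff $\{m\}'\supseteq\{n\}'$. Let $\mathcal{M}(M)$ be the set of attributes $m$ whose attribute concept $(\{m\}',\{m\}'')$ is meet-irreducible in the concept lattice of $\mathbb{K}$, and $\overline{\mathcal{M}(M)}=\{\overline m\mid m\in\mathcal{M}(M)\}$ new elements. The Birkhoff completion of $\mathbb{K}$ is $BC(\mathbb{K}):=\big(G\cup\overline{\mathcal{M}(M)},M,I\cup\{(\overline m,n)\in\overline{\mathcal{M}(M)}\times M\mid m\not\ge_{\mathbb{K}}n\}\big)$. For $\overline A\subseteq\overline{\mathcal{M}(M)}$, $\overline A^{!}=\{n\in M\mid \forall\overline m\in\overline A: m\not\ge_{\mathbb{K}} n\}$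 (with $\emptyset^{!}=M$). *)

theory Defs
  imports Main
begin

definition intent_of :: "'m set \<Rightarrow> ('g \<times> 'm) set \<Rightarrow> 'g set \<Rightarrow> 'm set" where
  "intent_of M I A = {m \<in> M. \<forall>g\<in>A. (g, m) \<in> I}"

definition extent_of :: "'g set \<Rightarrow> ('g \<times> 'm) set \<Rightarrow> 'm set \<Rightarrow> 'g set" where
  "extent_of G I B = {g \<in> G. \<forall>m\<in>B. (g, m) \<in> I}"

definition is_intent :: "'g set \<Rightarrow> 'm set \<Rightarrow> ('g \<times> 'm) set \<Rightarrow> 'm set \<Rightarrow> bool" where
  "is_intent G M I B \<longleftrightarrow> B \<subseteq> M \<and> intent_of M I (extent_of G I B) = B"

definition concepts :: "'g set \<Rightarrow> 'm set \<Rightarrow> ('g \<times> 'm) set \<Rightarrow> ('g set \<times> 'm set) set" where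
  "concepts G M I = {(A, B). A \<subseteq> G \<and> B \<subseteq> M \<and> intent_of M I A = B \<and> extent_of G I B = A}"

definition concept_le :: "('g set \<times> 'm set) \<Rightarrow> ('g set \<times> 'm set) \<Rightarrow> bool" where
  "concept_le x y \<longleftrightarrow> fst x \<subseteq> fst y"

definition is_inf_in :: "'a set \<Rightarrow> ('a \<Rightarrow> 'a \<Rightarrow> bool) \<Rightarrow> 'a \<Rightarrow> 'a \<Rightarrow> 'a \<Rightarrow> bool" where
  "is_inf_in P le y z x \<longleftrightarrow> x \<in> P \<and> le x y \<and> le x z \<and> (\<forall>w\<in>P. le w y \<and> le w z \<longrightarrow> le w x)"

definition meet_irreducible_in :: "'a set \<Rightarrow> ('a \<Rightarrow> 'a \<Rightarrow> bool) \<Rightarrow> 'a \<Rightarrow> bool" where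
  "meet_irreducible_in P le x \<longleftrightarrow> x \<in> P \<and> (\<exists>y\<in>P. \<not> le y x) \<and>
     (\<forall>y\<in>P. \<forall>z\<in>P. is_inf_in P le y z x \<longrightarrow> x = y \<or> x = z)"

definition attr_ge :: "'g set \<Rightarrow> ('g \<times> 'm) set \<Rightarrow> 'm \<Rightarrow> 'm \<Rightarrow> bool" where
  "attr_ge G I m n \<longleftrightarrow> extent_of G I {n} \<subseteq> extent_of G I {m}"

definition mirr_attrs :: "'g set \<Rightarrow> 'm set \<Rightarrow> ('g \<times> 'm) set \<Rightarrow> 'm set" where
  "mirr_attrs G M I = {m \<in> M. meet_irreducible_in (concepts G M I) concept_le
       (extent_of G I {m}, intent_of M I (extent_of G I {m}))}"

text \<open>Birkhoff completion: old objects g are Inl g, new objects mbar are Inr m.\<close>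
definition BC_objects :: "'g set \<Rightarrow> 'm set \<Rightarrow> ('g \<times> 'm) set \<Rightarrow> ('g + 'm) set" where
  "BC_objects G M I = Inl ` G \<union> Inr ` mirr_attrs G M I"

definition BC_incidence :: "'g set \<Rightarrow> 'm set \<Rightarrow> ('g \<times> 'm) set \<Rightarrow> (('g + 'm) \<times> 'm) set" where
  "BC_incidence G M I =
     {(Inl g, m) | g m. (g, m) \<in> I} \<union>
     {(Inr m, n) | m n. m \<in> mirr_attrs G M I \<and> n \<in> M \<and> \<not> attr_ge G I m n}"

end

theory Submission
  imports Defs
begin

text \<open>For g \<in> G and n \<notin> g', choose among the attributes m with g \<notin> m' \<supseteq> n' one whose
extent m' is maximal (M is finite).  Its attribute concept is meet-irreducible: every concept
strictly above it contains g, hence so does the meet of any two of them, so the attribute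
concept cannot be such a meet.  The new object for m in the Birkhoff completion therefore has
every attribute of g' but not n; intersecting the intents of these new objects gives g'.
Old objects keep their intents, and adding objects can only shrink a derived intent, so an
intent B = B'' of the original context is still closed in the completion.\<close>

lemma extent_intent_extent:
  assumes "B \<subseteq> M"
  shows "extent_of G I (intent_of M I (extent_of G I B)) = extent_of G I B"
  using assms unfolding extent_of_def intent_of_def by blast

lemma attribute_concept_mem_concepts:
  assumes "m \<in> M"
  shows "(extent_of G I {m}, intent_of M I (extent_of G I {m})) \<in> concepts G M I"
  using assms extent_intent_extent[of "{m}" M G I]
  unfolding concepts_def by (auto simp: extent_of_def intent_of_def)

lemma object_concept_mem_concepts:
  assumes "g \<in> G"
  shows "(extent_of G I (intent_of M I {g}), intent_of M I {g}) \<in> concepts G M I"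
  using assms unfolding concepts_def by (auto simp: extent_of_def intent_of_def)

lemma object_concept_le:
  assumes "x \<in> concepts G M I" and "g \<in> fst x"
  shows "concept_le (extent_of G I (intent_of M I {g}), intent_of M I {g}) x"
proof -
  obtain A B where x: "x = (A, B)" by (cases x)
  have "B \<subseteq> M" and eB: "extent_of G I B = A"
    using assms(1) unfolding x concepts_def by auto
  then have "B \<subseteq> intent_of M I {g}"
    using assms(2) unfolding x extent_of_def intent_of_def by auto
  then show ?thesis
    unfolding concept_le_def x using eB[symmetric] by (auto simp: extent_of_def)
qed

lemma concept_above_attribute_concept_contains:
  assumes gG: "g \<in> G"
    and max: "\<And>b. b \<in> M \<Longrightarrow> extent_of G I {m} \<subseteq> extent_of G I {b} \<Longrightarrow> g \<notin> extent_of G I {b}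
                \<Longrightarrow> extent_of G I {m} = extent_of G I {b}"
    and y: "y \<in> concepts G M I" "concept_le (extent_of G I {m}, intent_of M I (extent_of G I {m})) y"
      "y \<noteq> (extent_of G I {m}, intent_of M I (extent_of G I {m}))"
  shows "g \<in> fst y"
proof (rule ccontr)
  obtain A B where yAB: "y = (A, B)" by (cases y)
  have BM: "B \<subseteq> M" and iA: "intent_of M I A = B" and eB: "extent_of G I B = A"
    using y(1) unfolding yAB concepts_def by auto
  have mA: "extent_of G I {m} \<subseteq> A" using y(2) unfolding yAB concept_le_def by simp
  have strict: "extent_of G I {m} \<noteq> A" using y(3) iA unfolding yAB by auto
  assume "g \<notin> fst y"
  then obtain b where "b \<in> B" and "(g, b) \<notin> I"
    using gG eB unfolding yAB extent_of_def by auto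
  moreover have Ab: "A \<subseteq> extent_of G I {b}"
    using eB \<open>b \<in> B\<close> unfolding extent_of_def by auto
  ultimately have "extent_of G I {m} = extent_of G I {b}"
    using BM mA by (intro max) (auto simp: extent_of_def)
  then show False using mA strict Ab by auto
qed

lemma maximal_avoiding_attribute_mem_mirr_attrs:
  assumes mM: "m \<in> M" and gG: "g \<in> G" and gm: "g \<notin> extent_of G I {m}"
    and max: "\<And>b. b \<in> M \<Longrightarrow> extent_of G I {m} \<subseteq> extent_of G I {b} \<Longrightarrow> g \<notin> extent_of G I {b}
                \<Longrightarrow> extent_of G I {m} = extent_of G I {b}"
  shows "m \<in> mirr_attrs G M I"
proof -
  define P where "P = concepts G M I"
  define c where "c = (extent_of G I {m}, intent_of M I (extent_of G I {m}))"
  have cP: "c \<in> P" unfolding c_def P_def using mM by (rule attribute_concept_mem_concepts)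
  have topP: "(G, intent_of M I G) \<in> P"
    unfolding P_def concepts_def by (auto simp: extent_of_def intent_of_def)
  have not_top: "\<not> concept_le (G, intent_of M I G) c"
    using gG gm unfolding concept_le_def c_def by auto
  have "c = y \<or> c = z" if "y \<in> P" "z \<in> P" and inf: "is_inf_in P concept_le y z c" for y z
  proof (rule ccontr)
    assume "\<not> (c = y \<or> c = z)"
    then have "g \<in> fst y" "g \<in> fst z"
      using concept_above_attribute_concept_contains[OF gG max] that
      unfolding is_inf_in_def P_def c_def by metis+
    then have "concept_le (extent_of G I (intent_of M I {g}), intent_of M I {g}) c"
      using inf that object_concept_mem_concepts[OF gG] object_concept_le
      unfolding is_inf_in_def P_def by metis
    then show False
      using gG gm unfolding concept_le_def c_def by (auto simp: extent_of_def intent_of_def)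
  qed
  then have "meet_irreducible_in P concept_le c"
    unfolding meet_irreducible_in_def using cP topP not_top by blast
  then show ?thesis using mM unfolding mirr_attrs_def P_def c_def by auto
qed

lemma exists_mirr_attr_ge_nonincident:
  assumes fin: "finite M" and gG: "g \<in> G" and nM: "n \<in> M" and gn: "(g, n) \<notin> I"
  shows "\<exists>m\<in>mirr_attrs G M I. (g, m) \<notin> I \<and> attr_ge G I m n"
proof -
  define E where "E = (\<lambda>m. extent_of G I {m})"
  define S where "S = {m\<in>M. E n \<subseteq> E m \<and> g \<notin> E m}"
  have "n \<in> S" using nM gn unfolding S_def E_def extent_of_def by auto
  moreover have "finite (E ` S)" using fin unfolding S_def by auto
  ultimately obtain m where mS: "m \<in> S" and max_m: "\<forall>b\<in>S. E m \<subseteq> E b \<longrightarrow> E m = E b"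
    using finite_has_maximal2[of "E ` S" "E n"] by auto
  have mM: "m \<in> M" and nm: "E n \<subseteq> E m" and gm: "g \<notin> E m" using mS unfolding S_def by auto
  have "m \<in> mirr_attrs G M I"
  proof (rule maximal_avoiding_attribute_mem_mirr_attrs[OF mM gG])
    show "g \<notin> extent_of G I {m}" using gm unfolding E_def .
    fix b assume "b \<in> M" "extent_of G I {m} \<subseteq> extent_of G I {b}" "g \<notin> extent_of G I {b}"
    then show "extent_of G I {m} = extent_of G I {b}"
      using max_m nm unfolding S_def E_def by auto
  qed
  moreover have "(g, m) \<notin> I" using gm gG unfolding E_def extent_of_def by auto
  moreover have "attr_ge G I m n" using nm unfolding attr_ge_def E_def .
  ultimately show ?thesis by blast
qed

lemma BC_intent_old_object:
  "intent_of M (BC_incidence G M I) {Inl g} = intent_of M I {g}"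
  unfolding intent_of_def BC_incidence_def by auto

lemma BC_intent_new_objects_nonincident:
  assumes "finite M" and gG: "g \<in> G"
  shows "intent_of M (BC_incidence G M I) (Inr ` {m \<in> mirr_attrs G M I. (g, m) \<notin> I})
           = intent_of M I {g}"
proof
  show "intent_of M I {g} \<subseteq>
        intent_of M (BC_incidence G M I) (Inr ` {m \<in> mirr_attrs G M I. (g, m) \<notin> I})"
    using gG unfolding intent_of_def BC_incidence_def attr_ge_def extent_of_def by auto
  show "intent_of M (BC_incidence G M I) (Inr ` {m \<in> mirr_attrs G M I. (g, m) \<notin> I})
        \<subseteq> intent_of M I {g}"
  proof
    fix n
    assume n: "n \<in> intent_of M (BC_incidence G M I) (Inr ` {m \<in> mirr_attrs G M I. (g, m) \<notin> I})"
    then have nM: "n \<in> M" unfolding intent_of_def by auto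
    show "n \<in> intent_of M I {g}"
    proof (rule ccontr)
      assume "n \<notin> intent_of M I {g}"
      then have "(g, n) \<notin> I" using nM unfolding intent_of_def by auto
      then obtain m where "m \<in> mirr_attrs G M I" "(g, m) \<notin> I" "attr_ge G I m n"
        using exists_mirr_attr_ge_nonincident[OF assms nM] by blast
      then show False using n unfolding intent_of_def BC_incidence_def by auto
    qed
  qed
qed

lemma is_intent_BC:
  assumes "is_intent G M I B"
  shows "is_intent (BC_objects G M I) M (BC_incidence G M I) B"
proof -
  have BM: "B \<subseteq> M" and closed: "intent_of M I (extent_of G I B) = B"
    using assms unfolding is_intent_def by auto
  have "intent_of M (BC_incidence G M I) (extent_of (BC_objects G M I) (BC_incidence G M I) B)
        \<subseteq> intent_of M I (extent_of G I B)"
    unfolding intent_of_def extent_of_def BC_incidence_def BC_objects_def by auto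
  moreover have "B \<subseteq> intent_of M (BC_incidence G M I)
                     (extent_of (BC_objects G M I) (BC_incidence G M I) B)"
    using BM unfolding intent_of_def extent_of_def by auto
  ultimately show ?thesis unfolding is_intent_def using BM closed by auto
qed

theorem mainTheorem6:
  fixes G :: "'g set" and M :: "'m set" and I :: "('g \<times> 'm) set"
  assumes "finite G" and "finite M" and "I \<subseteq> G \<times> M"
  shows "(\<forall>g\<in>G.
           intent_of M (BC_incidence G M I) (Inr ` {m \<in> mirr_attrs G M I. (g, m) \<notin> I})
             = intent_of M (BC_incidence G M I) {Inl g}
         \<and> intent_of M (BC_incidence G M I) {Inl g} = intent_of M I {g})
       \<and> (\<forall>B. is_intent G M I B \<longrightarrow> is_intent (BC_objects G M I) M (BC_incidence G M I) B)"
proof (intro conjI ballI allI impI)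
  fix g assume "g \<in> G"
  with assms(2) show "intent_of M (BC_incidence G M I) (Inr ` {m \<in> mirr_attrs G M I. (g, m) \<notin> I})
               = intent_of M (BC_incidence G M I) {Inl g}"
    unfolding BC_intent_old_object by (rule BC_intent_new_objects_nonincident)
  show "intent_of M (BC_incidence G M I) {Inl g} = intent_of M I {g}"
    by (rule BC_intent_old_object)
next
  fix B assume "is_intent G M I B"
  then show "is_intent (BC_objects G M I) M (BC_incidence G M I) B" by (rule is_intent_BC)
qed

end
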